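(* Let $(x_t)_{t\in\Omega}$ be a continuous frame for a Hilbert space $H$ with analysis operator $\Theta:H\to L_2(\Omega)$, and let $x,y\in H$ be such that $x\neq\lambda y$ for every scalar $|\lambda|=1$. Then there exist $x_o,y_o\in \operatorname{span}\{x,y\}$ with $\|x_o\|=1$, $\|y_o\|\le 1$ and $\langle x_o,y_o\rangle=0$ such that $$\frac{\big\||\Theta x|-|\Theta y|\big\|}{\min_{|\lambda|=1}\|x-\lambda y\|}\ \ge\ \frac{\big\||\Theta x_o|-|\Theta y_o|\big\|}{\min_{|\lambda|=1}\|x_o-\lambda y_o\|}\ =\ \frac{\big\||\Theta x_o|-|\Theta y_o|\big\|}{(1+\|y_o\|^2)^{1/2}}.$$
   Context: $H$ is a real or complex Hilbert space; scalars $\lambda$ range over the field of $H$. A family $(x_t)_{t\in\Omega}\subseteq H$ indexed by a measure space $(\Omega,\mu)$ (with $t\mapsto\langle x,x_t\rangle$ measurable for each $x$) is a continuous frame if there are constants $B\ge A>0$ with $A\|x\|^2\le\int_\Omega|\langle x,x_t\rangle|^2\,d\mu(t)\le B\|x\|^2$ for all $x\in H$; $A$ is a lower frame bound. Its analysis operator is $\Theta:H\to L_2(\Omega)$, $\Theta(x)=(\langle x,x_t\rangle)_{t\in\Omega}$, and $|\Theta x|$ denotes the function $t\mapsto|\langle x,x_t\rangle|$. Norms of $|\Theta x|-|\Theta y|$ are taken in $L_2(\Omega)$. A (discrete) frame is the case of counting measure on a countable index set. *)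

theory Defs
  imports "HOL-Analysis.Analysis"
begin

class complex_inner = real_normed_vector +
  fixes scaleC :: "complex \<Rightarrow> 'a \<Rightarrow> 'a" (infixr \<open>*\<^sub>C\<close> 75)
    and cinner :: "'a \<Rightarrow> 'a \<Rightarrow> complex"
  assumes scaleC_add_right: "a *\<^sub>C (x + y) = a *\<^sub>C x + a *\<^sub>C y"
    and scaleC_add_left: "(a + b) *\<^sub>C x = a *\<^sub>C x + b *\<^sub>C x"
    and scaleC_scaleC: "a *\<^sub>C (b *\<^sub>C x) = (a * b) *\<^sub>C x"
    and scaleC_one: "1 *\<^sub>C x = x"
    and scaleR_scaleC: "scaleR r x = complex_of_real r *\<^sub>C x"
    and cinner_add_left: "cinner (x + y) z = cinner x z + cinner y z"
    and cinner_scaleC_left: "cinner (a *\<^sub>C x) y = a * cinner x y"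
    and cinner_commute: "cinner x y = cnj (cinner y x)"
    and cinner_self_nonneg: "0 \<le> Re (cinner x x)"
    and norm_eq_sqrt_cinner: "norm x = sqrt (Re (cinner x x))"

definition rframe :: "'t measure \<Rightarrow> ('t \<Rightarrow> 'a::{real_inner,complete_space}) \<Rightarrow> bool" where
  "rframe M xt \<longleftrightarrow>
     (\<forall>x. (\<lambda>t. inner x (xt t)) \<in> borel_measurable M) \<and>
     (\<exists>A B. 0 < A \<and> A \<le> B \<and>
        (\<forall>x. ennreal (A * (norm x)\<^sup>2) \<le> (\<integral>\<^sup>+ t. ennreal ((inner x (xt t))\<^sup>2) \<partial>M) \<and>
             (\<integral>\<^sup>+ t. ennreal ((inner x (xt t))\<^sup>2) \<partial>M) \<le> ennreal (B * (norm x)\<^sup>2)))"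

definition rphase_dist :: "'t measure \<Rightarrow> ('t \<Rightarrow> 'a::real_inner) \<Rightarrow> 'a \<Rightarrow> 'a \<Rightarrow> real" where
  "rphase_dist M xt x y =
     sqrt (enn2real (\<integral>\<^sup>+ t. ennreal ((\<bar>inner x (xt t)\<bar> - \<bar>inner y (xt t)\<bar>)\<^sup>2) \<partial>M))"

definition rmin_unimod :: "'a::real_normed_vector \<Rightarrow> 'a \<Rightarrow> real" where
  "rmin_unimod x y = Inf {norm (x - l *\<^sub>R y) | l::real. \<bar>l\<bar> = 1}"

definition cframe :: "'t measure \<Rightarrow> ('t \<Rightarrow> 'a::{complex_inner,complete_space}) \<Rightarrow> bool" where
  "cframe M xt \<longleftrightarrow>
     (\<forall>x. (\<lambda>t. cinner x (xt t)) \<in> borel_measurable M) \<and>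
     (\<exists>A B. 0 < A \<and> A \<le> B \<and>
        (\<forall>x. ennreal (A * (norm x)\<^sup>2) \<le> (\<integral>\<^sup>+ t. ennreal ((cmod (cinner x (xt t)))\<^sup>2) \<partial>M) \<and>
             (\<integral>\<^sup>+ t. ennreal ((cmod (cinner x (xt t)))\<^sup>2) \<partial>M) \<le> ennreal (B * (norm x)\<^sup>2)))"

definition cphase_dist :: "'t measure \<Rightarrow> ('t \<Rightarrow> 'a::complex_inner) \<Rightarrow> 'a \<Rightarrow> 'a \<Rightarrow> real" where
  "cphase_dist M xt x y =
     sqrt (enn2real (\<integral>\<^sup>+ t. ennreal ((cmod (cinner x (xt t)) - cmod (cinner y (xt t)))\<^sup>2) \<partial>M))"

definition cmin_unimod :: "'a::complex_inner \<Rightarrow> 'a \<Rightarrow> real" where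
  "cmin_unimod x y = Inf {norm (x - l *\<^sub>C y) | l::complex. cmod l = 1}"

end

theory Submission
  imports Defs
begin

text \<open>Multiplying \<open>y\<close> by a unimodular scalar we may assume \<open>\<langle>x, y\<rangle> \<ge> 0\<close>; then the minimum
  of \<open>\<parallel>x - \<lambda> y\<parallel>\<close> over \<open>|\<lambda>| = 1\<close> is \<open>\<parallel>x - y\<parallel>\<close>. For \<open>c = \<parallel>x - y\<parallel> / \<parallel>x + y\<parallel> \<in> [0, 1]\<close> the vectors
  \<open>u = ((c + 1)/2) x + ((c - 1)/2) y\<close> and \<open>v = ((c - 1)/2) x + ((c + 1)/2) y\<close> are orthogonal with
  \<open>\<parallel>u\<parallel>\<^sup>2 + \<parallel>v\<parallel>\<^sup>2 = \<parallel>x - y\<parallel>\<^sup>2\<close>, and pointwise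
  \<open>||\<langle>u, x\<^sub>t\<rangle>| - |\<langle>v, x\<^sub>t\<rangle>|| \<le> ||\<langle>x, x\<^sub>t\<rangle>| - |\<langle>y, x\<^sub>t\<rangle>||\<close>, because in any inner product space
  \<open>|\<parallel>c p + q\<parallel> - \<parallel>c p - q\<parallel>|\<close> is largest at \<open>c = 1\<close> (take \<open>p = a + b\<close>, \<open>q = a - b\<close> for the
  scalars \<open>a = \<langle>x, x\<^sub>t\<rangle>\<close>, \<open>b = \<langle>y, x\<^sub>t\<rangle>\<close>). Rescaling the longer of \<open>u, v\<close> to unit length gives
  \<open>x\<^sub>o, y\<^sub>o\<close>, since the ratio is scale invariant.\<close>

definition L2_dist :: "'t measure \<Rightarrow> ('t \<Rightarrow> real) \<Rightarrow> ('t \<Rightarrow> real) \<Rightarrow> real" where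
  "L2_dist M f g = sqrt (enn2real (\<integral>\<^sup>+ t. ennreal ((f t - g t)\<^sup>2) \<partial>M))"

lemma L2_dist_commute: "L2_dist M f g = L2_dist M g f"
  unfolding L2_dist_def by (simp add: power2_commute)

lemma nn_integral_sq_diff_finite:
  assumes "f \<in> borel_measurable M" "g \<in> borel_measurable M" "\<And>t. 0 \<le> f t" "\<And>t. 0 \<le> g t"
    and "(\<integral>\<^sup>+ t. ennreal ((f t)\<^sup>2) \<partial>M) < \<infinity>" "(\<integral>\<^sup>+ t. ennreal ((g t)\<^sup>2) \<partial>M) < \<infinity>"
  shows "(\<integral>\<^sup>+ t. ennreal ((f t - g t)\<^sup>2) \<partial>M) < \<infinity>"
proof -
  have "(\<integral>\<^sup>+ t. ennreal ((f t - g t)\<^sup>2) \<partial>M) \<le> (\<integral>\<^sup>+ t. ennreal ((f t)\<^sup>2) + ennreal ((g t)\<^sup>2) \<partial>M)"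
  proof (rule nn_integral_mono)
    fix t
    have "(f t - g t)\<^sup>2 \<le> (f t)\<^sup>2 + (g t)\<^sup>2"
      using mult_nonneg_nonneg[OF assms(3,4)] by (simp add: power2_diff)
    then show "ennreal ((f t - g t)\<^sup>2) \<le> ennreal ((f t)\<^sup>2) + ennreal ((g t)\<^sup>2)"
      by (simp flip: ennreal_plus)
  qed
  also have "\<dots> = (\<integral>\<^sup>+ t. ennreal ((f t)\<^sup>2) \<partial>M) + (\<integral>\<^sup>+ t. ennreal ((g t)\<^sup>2) \<partial>M)"
    using assms(1,2) by (intro nn_integral_add) auto
  also have "\<dots> < \<infinity>"
    using assms(5,6) by simp
  finally show ?thesis .
qed

lemma L2_dist_mono:
  assumes "\<And>t. \<bar>f' t - g' t\<bar> \<le> \<bar>f t - g t\<bar>"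
    and "(\<integral>\<^sup>+ t. ennreal ((f t - g t)\<^sup>2) \<partial>M) < \<infinity>"
  shows "L2_dist M f' g' \<le> L2_dist M f g"
  unfolding L2_dist_def
proof (intro real_sqrt_le_mono enn2real_mono nn_integral_mono)
  show "ennreal ((f' t - g' t)\<^sup>2) \<le> ennreal ((f t - g t)\<^sup>2)" for t
    using assms(1) by (simp add: ennreal_leI flip: abs_le_square_iff)
qed (use assms(2) in auto)

lemma L2_dist_scale:
  assumes "f \<in> borel_measurable M" "g \<in> borel_measurable M" "0 \<le> r"
  shows "L2_dist M (\<lambda>t. r * f t) (\<lambda>t. r * g t) = r * L2_dist M f g"
proof -
  have "(\<integral>\<^sup>+ t. ennreal ((r * f t - r * g t)\<^sup>2) \<partial>M) = (\<integral>\<^sup>+ t. ennreal (r\<^sup>2) * ennreal ((f t - g t)\<^sup>2) \<partial>M)"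
    by (intro nn_integral_cong) (simp add: ennreal_mult' power_mult_distrib flip: right_diff_distrib)
  also have "\<dots> = ennreal (r\<^sup>2) * (\<integral>\<^sup>+ t. ennreal ((f t - g t)\<^sup>2) \<partial>M)"
    using assms(1,2) by (intro nn_integral_cmult) measurable
  finally show ?thesis
    unfolding L2_dist_def using assms(3) by (simp add: enn2real_mult real_sqrt_mult)
qed

lemma norm_gap_mult_norm_sum:
  fixes a b :: "'v::real_inner"
  shows "(norm (a + b) - norm (a - b)) * (norm (a + b) + norm (a - b)) = 4 * inner a b"
proof -
  have "(norm (a + b) - norm (a - b)) * (norm (a + b) + norm (a - b)) = (norm (a + b))\<^sup>2 - (norm (a - b))\<^sup>2"
    by (simp add: power2_eq_square algebra_simps)
  also have "\<dots> = 4 * inner a b"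
    by (simp add: power2_norm_eq_inner inner_add inner_diff inner_commute)
  finally show ?thesis .
qed

lemma norm_sum_scaleR_ge:
  fixes p q :: "'v::real_inner"
  assumes "0 \<le> c" "c \<le> 1"
  shows "c * (norm (p + q) + norm (p - q)) \<le> norm (c *\<^sub>R p + q) + norm (c *\<^sub>R p - q)"
proof -
  have tri: "norm (a *\<^sub>R z + b *\<^sub>R w) \<le> a * norm z + b * norm w"
    if "0 \<le> a" "0 \<le> b" for a b and z w :: 'v
    using norm_triangle_ineq[of "a *\<^sub>R z" "b *\<^sub>R w"] that by simp
  have coeffs: "0 \<le> (1 + c) / 2" "0 \<le> (1 - c) / 2"
    using assms by simp_all
  have plus: "c *\<^sub>R (p + q) = ((1 + c) / 2) *\<^sub>R (c *\<^sub>R p + q) + ((1 - c) / 2) *\<^sub>R (c *\<^sub>R p - q)"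
    and minus: "c *\<^sub>R (p - q) = ((1 - c) / 2) *\<^sub>R (c *\<^sub>R p + q) + ((1 + c) / 2) *\<^sub>R (c *\<^sub>R p - q)"
    by (simp_all add: algebra_simps add_divide_distrib diff_divide_distrib)
      (simp_all add: add.assoc[symmetric] scaleR_add_left[symmetric])
  have "c * norm (p + q) \<le> (1 + c) / 2 * norm (c *\<^sub>R p + q) + (1 - c) / 2 * norm (c *\<^sub>R p - q)"
    and "c * norm (p - q) \<le> (1 - c) / 2 * norm (c *\<^sub>R p + q) + (1 + c) / 2 * norm (c *\<^sub>R p - q)"
    using tri[OF coeffs, of "c *\<^sub>R p + q" "c *\<^sub>R p - q"] tri[OF coeffs(2,1), of "c *\<^sub>R p + q" "c *\<^sub>R p - q"] assms(1)
    by (simp_all only: plus[symmetric] minus[symmetric] norm_scaleR abs_of_nonneg)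
  then show ?thesis
    by (simp add: field_simps)
qed

text \<open>The gap times the sum of the two norms is \<open>4 c \<langle>p, q\<rangle>\<close>, while the sum
  shrinks at most by the factor \<open>c\<close>; hence the gap shrinks.\<close>
lemma norm_gap_scaleR_le:
  fixes p q :: "'v::real_inner"
  assumes "0 \<le> c" "c \<le> 1"
  shows "\<bar>norm (c *\<^sub>R p + q) - norm (c *\<^sub>R p - q)\<bar> \<le> \<bar>norm (p + q) - norm (p - q)\<bar>"
proof -
  define S where "S = norm (c *\<^sub>R p + q) + norm (c *\<^sub>R p - q)"
  define S1 where "S1 = norm (p + q) + norm (p - q)"
  have "S \<ge> 0" "S1 \<ge> 0"
    by (simp_all add: S_def S1_def)
  have "\<bar>norm (c *\<^sub>R p + q) - norm (c *\<^sub>R p - q)\<bar> * S = \<bar>(norm (c *\<^sub>R p + q) - norm (c *\<^sub>R p - q)) * S\<bar>"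
    using \<open>S \<ge> 0\<close> by (simp add: abs_mult)
  also have "\<dots> = \<bar>4 * inner (c *\<^sub>R p) q\<bar>"
    by (simp only: S_def norm_gap_mult_norm_sum)
  also have "\<dots> = c * \<bar>4 * inner p q\<bar>"
    using assms(1) by (simp add: abs_mult)
  also have "\<dots> = c * \<bar>(norm (p + q) - norm (p - q)) * S1\<bar>"
    by (simp only: S1_def norm_gap_mult_norm_sum)
  also have "\<dots> = \<bar>norm (p + q) - norm (p - q)\<bar> * (c * S1)"
    using \<open>S1 \<ge> 0\<close> by (simp add: abs_mult)
  also have "\<dots> \<le> \<bar>norm (p + q) - norm (p - q)\<bar> * S"
    using norm_sum_scaleR_ge[OF assms, of p q] by (simp add: S_def S1_def mult_left_mono)
  finally have scaled: "\<bar>norm (c *\<^sub>R p + q) - norm (c *\<^sub>R p - q)\<bar> * S \<le> \<bar>norm (p + q) - norm (p - q)\<bar> * S" .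
  show ?thesis
  proof (cases "S = 0")
    case True
    then have "norm (c *\<^sub>R p + q) = 0" "norm (c *\<^sub>R p - q) = 0"
      using norm_ge_zero[of "c *\<^sub>R p + q"] norm_ge_zero[of "c *\<^sub>R p - q"] unfolding S_def by linarith+
    then show ?thesis
      by simp
  next
    case False
    with \<open>S \<ge> 0\<close> scaled show ?thesis
      by simp
  qed
qed

lemma norm_gap_combination_le:
  fixes a b :: "'v::real_inner"
  assumes "0 \<le> c" "c \<le> 1"
  shows "\<bar>norm (((c + 1) / 2) *\<^sub>R a + ((c - 1) / 2) *\<^sub>R b) - norm (((c - 1) / 2) *\<^sub>R a + ((c + 1) / 2) *\<^sub>R b)\<bar>
    \<le> \<bar>norm a - norm b\<bar>"
proof -
  have "((c + 1) / 2) *\<^sub>R a + ((c - 1) / 2) *\<^sub>R b = (1 / 2) *\<^sub>R (c *\<^sub>R (a + b) + (a - b))"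
    and "((c - 1) / 2) *\<^sub>R a + ((c + 1) / 2) *\<^sub>R b = (1 / 2) *\<^sub>R (c *\<^sub>R (a + b) - (a - b))"
    and "(a + b) + (a - b) = 2 *\<^sub>R a" "(a + b) - (a - b) = 2 *\<^sub>R b"
    by (simp_all add: algebra_simps add_divide_distrib diff_divide_distrib scaleR_2)
  then show ?thesis
    using norm_gap_scaleR_le[OF assms, of "a + b" "a - b"] by simp
qed

text \<open>The real and the complex case at once: \<open>'k\<close> is \<open>\<real>\<close> or \<open>\<complex>\<close> with conjugation \<open>cj\<close>,
  and the inner product \<open>ip\<close> is linear in its first argument.\<close>
locale inner_product_space =
  fixes smult :: "'k::{real_normed_field,real_inner} \<Rightarrow> 'a::real_normed_vector \<Rightarrow> 'a"
    and ip :: "'a \<Rightarrow> 'a \<Rightarrow> 'k"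
    and cj :: "'k \<Rightarrow> 'k"
  assumes smult_add_right: "smult a (x + y) = smult a x + smult a y"
    and smult_smult: "smult a (smult b x) = smult (a * b) x"
    and scaleR_eq_smult: "r *\<^sub>R x = smult (of_real r) x"
    and ip_add_left: "ip (x + y) z = ip x z + ip y z"
    and ip_smult_left: "ip (smult a x) y = a * ip x y"
    and ip_commute: "ip x y = cj (ip y x)"
    and ip_self: "ip x x = of_real ((norm x)\<^sup>2)"
    and cj_add: "cj (a + b) = cj a + cj b"
    and cj_mult: "cj (a * b) = cj a * cj b"
    and cj_of_real: "cj (of_real r) = of_real r"
    and mult_cj: "a * cj a = of_real ((norm a)\<^sup>2)"
    and norm_cj: "norm (cj a) = norm a"
begin

lemma cj_zero: "cj 0 = 0"
  using cj_of_real[of 0] by simp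

lemma ip_add_right: "ip x (y + z) = ip x y + ip x z"
  by (metis ip_add_left ip_commute cj_add)

lemma ip_smult_right: "ip x (smult a y) = cj a * ip x y"
  by (metis ip_smult_left ip_commute cj_mult)

lemma ip_scaleR_left: "ip (r *\<^sub>R x) y = of_real r * ip x y"
  by (simp add: scaleR_eq_smult ip_smult_left)

lemma ip_scaleR_right: "ip x (r *\<^sub>R y) = of_real r * ip x y"
  by (simp add: scaleR_eq_smult ip_smult_right cj_of_real)

lemma ip_minus_left: "ip (- x) y = - ip x y"
  using ip_scaleR_left[of "-1" x y] by simp

lemma ip_minus_right: "ip x (- y) = - ip x y"
  using ip_scaleR_right[of x "-1" y] by simp

lemma ip_diff_left: "ip (x - y) z = ip x z - ip y z"
  by (simp only: diff_conv_add_uminus ip_add_left ip_minus_left)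

lemma ip_diff_right: "ip x (y - z) = ip x y - ip x z"
  by (simp only: diff_conv_add_uminus ip_add_right ip_minus_right)

lemma scaleR_smult_combination:
  "r *\<^sub>R (smult a x + smult b y) = smult (of_real r * a) x + smult (of_real r * b) y"
  by (simp add: scaleR_eq_smult smult_add_right smult_smult)

lemma norm_sq_eq_iff_ip_self: "(norm x)\<^sup>2 = r \<longleftrightarrow> ip x x = of_real r"
  by (simp only: ip_self of_real_eq_iff)

lemma smult_one: "smult 1 x = x"
  using scaleR_eq_smult[of 1 x] by simp

lemma norm_smult: "norm (smult a x) = norm a * norm x"
proof -
  have "ip (smult a x) (smult a x) = a * cj a * ip x x"
    by (simp add: ip_smult_left ip_smult_right mult.assoc)
  also have "\<dots> = of_real ((norm a * norm x)\<^sup>2)"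
    by (simp only: mult_cj ip_self power_mult_distrib of_real_mult)
  finally have "(norm (smult a x))\<^sup>2 = (norm a * norm x)\<^sup>2"
    by (simp only: norm_sq_eq_iff_ip_self)
  then show ?thesis
    by (simp add: power2_eq_iff_nonneg)
qed

definition min_unimod :: "'a \<Rightarrow> 'a \<Rightarrow> real" where
  "min_unimod x y = Inf {norm (x - smult l y) |l. norm l = 1}"

lemma exists_unimodular_aligning:
  obtains s where "norm s = 1" "ip x (smult s y) = of_real (norm (ip x y))"
proof (cases "ip x y = 0")
  case True
  then show ?thesis
    using that[of 1] by (simp add: ip_smult_right)
next
  case False
  define r where "r = 1 / norm (ip x y)"
  define s where "s = of_real r * ip x y"
  have "norm s = 1"
    using False by (simp add: s_def r_def norm_mult norm_divide)
  have "ip x (smult s y) = of_real r * (ip x y * cj (ip x y))"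
    by (simp add: s_def ip_smult_right cj_mult cj_of_real ac_simps)
  also have "\<dots> = of_real (r * (norm (ip x y))\<^sup>2)"
    by (simp only: mult_cj of_real_mult)
  also have "\<dots> = of_real (norm (ip x y))"
    using False by (simp add: r_def power2_eq_square)
  finally show ?thesis
    using that \<open>norm s = 1\<close> by blast
qed

lemma ip_self_diff_smult:
  "ip (x - smult l y) (x - smult l y)
     = of_real ((norm x)\<^sup>2 + (norm l * norm y)\<^sup>2) - (ip x (smult l y) + cj (ip x (smult l y)))"
proof -
  have "ip (x - smult l y) (x - smult l y)
      = ip x x + ip (smult l y) (smult l y) - (ip x (smult l y) + ip (smult l y) x)"
    by (simp add: ip_diff_left ip_diff_right algebra_simps)
  then show ?thesis
    by (simp add: ip_self norm_smult flip: ip_commute)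
qed

lemma norm_diff_smult_sq_ge:
  assumes "norm l = 1"
  shows "(norm x)\<^sup>2 + (norm y)\<^sup>2 - 2 * norm (ip x y) \<le> (norm (x - smult l y))\<^sup>2"
proof -
  define w where "w = ip x (smult l y)"
  have "of_real ((norm x)\<^sup>2 + (norm y)\<^sup>2 - (norm (x - smult l y))\<^sup>2)
      = of_real ((norm x)\<^sup>2 + (norm l * norm y)\<^sup>2) - ip (x - smult l y) (x - smult l y)"
    using assms by (simp add: ip_self)
  also have "\<dots> = w + cj w"
    by (simp add: ip_self_diff_smult w_def)
  finally have "of_real ((norm x)\<^sup>2 + (norm y)\<^sup>2 - (norm (x - smult l y))\<^sup>2) = w + cj w" .
  then have "\<bar>(norm x)\<^sup>2 + (norm y)\<^sup>2 - (norm (x - smult l y))\<^sup>2\<bar> = norm (w + cj w)"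
    by (metis norm_of_real)
  also have "\<dots> \<le> 2 * norm (ip x y)"
    using norm_triangle_ineq[of w "cj w"] assms by (simp add: w_def norm_cj ip_smult_right norm_mult)
  finally show ?thesis
    by linarith
qed

lemma min_unimod_aligned:
  assumes "norm s = 1" "ip x (smult s y) = of_real (norm (ip x y))"
  shows "min_unimod x y = norm (x - smult s y)"
  unfolding min_unimod_def
proof (rule cInf_eq_minimum)
  show "norm (x - smult s y) \<in> {norm (x - smult l y) |l. norm l = 1}"
    using assms(1) by blast
next
  fix d
  assume "d \<in> {norm (x - smult l y) |l. norm l = 1}"
  then obtain l where l: "norm l = 1" "d = norm (x - smult l y)"
    by blast
  have "(norm (x - smult s y))\<^sup>2 = (norm x)\<^sup>2 + (norm y)\<^sup>2 - 2 * norm (ip x y)"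
    unfolding norm_sq_eq_iff_ip_self ip_self_diff_smult assms cj_of_real by simp
  then have "(norm (x - smult s y))\<^sup>2 \<le> d\<^sup>2"
    using norm_diff_smult_sq_ge[OF l(1)] l(2) by simp
  then show "norm (x - smult s y) \<le> d"
    by (rule power2_le_imp_le) (use l(2) in simp)
qed

lemma min_unimod_orthogonal:
  assumes "ip x y = 0"
  shows "min_unimod x y = sqrt ((norm x)\<^sup>2 + (norm y)\<^sup>2)"
proof -
  have aligned: "ip x (smult 1 y) = of_real (norm (ip x y))"
    using assms by (simp add: smult_one)
  have "(norm (x - y))\<^sup>2 = (norm x)\<^sup>2 + (norm y)\<^sup>2"
    using ip_self_diff_smult[of x 1 y] unfolding norm_sq_eq_iff_ip_self smult_one assms cj_zero by simp
  then show ?thesis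
    using min_unimod_aligned[OF _ aligned] by (simp add: smult_one real_sqrt_unique)
qed

lemma ip_scaleR_combination:
  assumes "ip x y = of_real g"
  shows "ip (a *\<^sub>R x + b *\<^sub>R y) (c *\<^sub>R x + d *\<^sub>R y)
    = of_real (a * c * (norm x)\<^sup>2 + (a * d + b * c) * g + b * d * (norm y)\<^sup>2)"
proof -
  have "ip y x = of_real g"
    using assms by (metis ip_commute cj_of_real)
  then show ?thesis
    using assms by (simp add: ip_add_left ip_add_right ip_scaleR_left ip_scaleR_right ip_self algebra_simps)
qed

lemma norm_scaleR_combination_sq:
  assumes "ip x y = of_real g"
  shows "(norm (a *\<^sub>R x + b *\<^sub>R y))\<^sup>2 = a\<^sup>2 * (norm x)\<^sup>2 + 2 * a * b * g + b\<^sup>2 * (norm y)\<^sup>2"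
  unfolding norm_sq_eq_iff_ip_self ip_scaleR_combination[OF assms] of_real_eq_iff
  by (simp add: power2_eq_square algebra_simps)

lemma aligned_pair_orthogonalization:
  assumes aligned: "ip x y = of_real g" and "0 \<le> g"
  defines "c \<equiv> norm (x - y) / norm (x + y)"
  defines "u \<equiv> ((c + 1) / 2) *\<^sub>R x + ((c - 1) / 2) *\<^sub>R y"
    and "v \<equiv> ((c - 1) / 2) *\<^sub>R x + ((c + 1) / 2) *\<^sub>R y"
  shows "ip u v = 0"
    and "(norm u)\<^sup>2 + (norm v)\<^sup>2 = (norm (x - y))\<^sup>2"
    and "\<bar>norm (ip u z) - norm (ip v z)\<bar> \<le> \<bar>norm (ip x z) - norm (ip y z)\<bar>"
proof -
  define S where "S = (norm x)\<^sup>2 + (norm y)\<^sup>2"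
  have minus: "(norm (x - y))\<^sup>2 = S - 2 * g"
    using norm_scaleR_combination_sq[OF aligned, of 1 "-1"] by (simp add: S_def)
  have plus: "(norm (x + y))\<^sup>2 = S + 2 * g"
    using norm_scaleR_combination_sq[OF aligned, of 1 1] by (simp add: S_def)
  have le: "norm (x - y) \<le> norm (x + y)"
    by (rule power2_le_imp_le) (use minus plus \<open>0 \<le> g\<close> in auto)
  then have c_bounds: "0 \<le> c" "c \<le> 1"
    by (auto simp: c_def divide_le_eq_1)
  have "c * norm (x + y) = norm (x - y)"
    using le by (cases "norm (x + y) = 0") (auto simp: c_def)
  then have key: "c\<^sup>2 * (S + 2 * g) = S - 2 * g"
    using plus minus by (metis power_mult_distrib)
  have "ip u v = of_real ((c\<^sup>2 * (S + 2 * g) - (S - 2 * g)) / 4)"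
    unfolding u_def v_def ip_scaleR_combination[OF aligned] of_real_eq_iff S_def
    by (simp add: field_simps power2_eq_square)
  then show "ip u v = 0"
    using key by simp
  have "(norm u)\<^sup>2 + (norm v)\<^sup>2 = (c\<^sup>2 * (S + 2 * g) + (S - 2 * g)) / 2"
    unfolding u_def v_def norm_scaleR_combination_sq[OF aligned] S_def
    by (simp add: field_simps power2_eq_square)
  then show "(norm u)\<^sup>2 + (norm v)\<^sup>2 = (norm (x - y))\<^sup>2"
    using key minus by simp
  have "ip u z = ((c + 1) / 2) *\<^sub>R ip x z + ((c - 1) / 2) *\<^sub>R ip y z"
    and "ip v z = ((c - 1) / 2) *\<^sub>R ip x z + ((c + 1) / 2) *\<^sub>R ip y z"
    by (simp_all add: u_def v_def ip_add_left ip_scaleR_left scaleR_conv_of_real)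
  then show "\<bar>norm (ip u z) - norm (ip v z)\<bar> \<le> \<bar>norm (ip x z) - norm (ip y z)\<bar>"
    using norm_gap_combination_le[OF c_bounds] by simp
qed

lemma exists_orthogonal_contraction:
  obtains u v where "\<exists>a b. u = smult a x + smult b y" "\<exists>a b. v = smult a x + smult b y"
    and "ip u v = 0" "(norm u)\<^sup>2 + (norm v)\<^sup>2 = (min_unimod x y)\<^sup>2"
    and "\<And>z. \<bar>norm (ip u z) - norm (ip v z)\<bar> \<le> \<bar>norm (ip x z) - norm (ip y z)\<bar>"
proof -
  obtain s where s: "norm s = 1" "ip x (smult s y) = of_real (norm (ip x y))"
    by (rule exists_unimodular_aligning)
  define c where "c = norm (x - smult s y) / norm (x + smult s y)"
  define u where "u = ((c + 1) / 2) *\<^sub>R x + ((c - 1) / 2) *\<^sub>R smult s y"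
  define v where "v = ((c - 1) / 2) *\<^sub>R x + ((c + 1) / 2) *\<^sub>R smult s y"
  note orth = aligned_pair_orthogonalization[OF s(2) norm_ge_zero, folded c_def, folded u_def v_def]
  have "\<exists>a b. a' *\<^sub>R x + b' *\<^sub>R smult s y = smult a x + smult b y" for a' b'
    by (auto simp: scaleR_eq_smult smult_smult)
  then have "\<exists>a b. u = smult a x + smult b y" "\<exists>a b. v = smult a x + smult b y"
    by (simp_all add: u_def v_def)
  moreover have "(norm u)\<^sup>2 + (norm v)\<^sup>2 = (min_unimod x y)\<^sup>2"
    using orth(2) min_unimod_aligned[OF s] by simp
  moreover have "norm (ip (smult s y) z) = norm (ip y z)" for z
    using s(1) by (simp add: ip_smult_left norm_mult)
  ultimately show ?thesis
    using that orth(1,3) by metis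
qed

definition phase_dist :: "'t measure \<Rightarrow> ('t \<Rightarrow> 'a) \<Rightarrow> 'a \<Rightarrow> 'a \<Rightarrow> real" where
  "phase_dist M xt x y = L2_dist M (\<lambda>t. norm (ip x (xt t))) (\<lambda>t. norm (ip y (xt t)))"

lemma phase_dist_commute: "phase_dist M xt x y = phase_dist M xt y x"
  by (simp add: phase_dist_def L2_dist_commute)

lemma phase_dist_scaleR:
  assumes "\<And>z. (\<lambda>t. ip z (xt t)) \<in> borel_measurable M" and "0 \<le> r"
  shows "phase_dist M xt (r *\<^sub>R x) (r *\<^sub>R y) = r * phase_dist M xt x y"
proof -
  have "(\<lambda>t. norm (ip z (xt t))) \<in> borel_measurable M" for z
    using assms(1)[of z] by measurable
  then show ?thesis
    using L2_dist_scale[of _ M _ r] assms(2)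
    by (simp add: phase_dist_def ip_scaleR_left norm_mult)
qed

lemma phase_dist_mono:
  assumes "\<And>z. (\<lambda>t. ip z (xt t)) \<in> borel_measurable M"
    and "\<And>z. (\<integral>\<^sup>+ t. ennreal ((norm (ip z (xt t)))\<^sup>2) \<partial>M) < \<infinity>"
    and "\<And>z. \<bar>norm (ip u z) - norm (ip v z)\<bar> \<le> \<bar>norm (ip x z) - norm (ip y z)\<bar>"
  shows "phase_dist M xt u v \<le> phase_dist M xt x y"
proof -
  have "(\<lambda>t. norm (ip z (xt t))) \<in> borel_measurable M" for z
    using assms(1)[of z] by measurable
  then show ?thesis
    unfolding phase_dist_def using assms(2,3)
    by (intro L2_dist_mono nn_integral_sq_diff_finite) auto
qed

lemma normalized_orthogonal_pair:
  assumes meas: "\<And>z. (\<lambda>t. ip z (xt t)) \<in> borel_measurable M"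
    and orth: "ip x y = 0" and "norm y \<le> norm x" "x \<noteq> 0"
  defines "xo \<equiv> (1 / norm x) *\<^sub>R x" and "yo \<equiv> (1 / norm x) *\<^sub>R y"
  shows "norm xo = 1" "norm yo \<le> 1" "ip xo yo = 0"
    and "min_unimod xo yo = sqrt (1 + (norm yo)\<^sup>2)"
    and "phase_dist M xt xo yo / min_unimod xo yo = phase_dist M xt x y / min_unimod x y"
proof -
  show "norm xo = 1" "norm yo \<le> 1"
    using assms(3,4) by (simp_all add: xo_def yo_def divide_le_eq_1)
  show "ip xo yo = 0"
    using orth by (simp add: xo_def yo_def ip_scaleR_left ip_scaleR_right)
  then show min_o: "min_unimod xo yo = sqrt (1 + (norm yo)\<^sup>2)"
    using min_unimod_orthogonal \<open>norm xo = 1\<close> by simp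
  have "min_unimod x y = norm x * sqrt (1 + (norm yo)\<^sup>2)"
    using min_unimod_orthogonal[OF orth] assms(4)
    by (simp add: yo_def power_divide field_simps real_sqrt_divide)
  moreover have "phase_dist M xt xo yo = phase_dist M xt x y / norm x"
    using phase_dist_scaleR[OF meas, of "1 / norm x"] by (simp add: xo_def yo_def)
  ultimately show "phase_dist M xt xo yo / min_unimod xo yo = phase_dist M xt x y / min_unimod x y"
    by (simp add: min_o)
qed

theorem phase_ratio_orthogonal_reduction:
  assumes meas: "\<And>z. (\<lambda>t. ip z (xt t)) \<in> borel_measurable M"
    and sq_int: "\<And>z. (\<integral>\<^sup>+ t. ennreal ((norm (ip z (xt t)))\<^sup>2) \<partial>M) < \<infinity>"
    and not_unimod: "\<forall>l. norm l = 1 \<longrightarrow> x \<noteq> smult l y"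
  obtains xo yo where "\<exists>a b. xo = smult a x + smult b y" "\<exists>a b. yo = smult a x + smult b y"
    and "norm xo = 1" "norm yo \<le> 1" "ip xo yo = 0"
    and "phase_dist M xt xo yo / min_unimod xo yo \<le> phase_dist M xt x y / min_unimod x y"
    and "min_unimod xo yo = sqrt (1 + (norm yo)\<^sup>2)"
proof -
  obtain u v where span: "\<exists>a b. u = smult a x + smult b y" "\<exists>a b. v = smult a x + smult b y"
    and "ip u v = 0" and norms: "(norm u)\<^sup>2 + (norm v)\<^sup>2 = (min_unimod x y)\<^sup>2"
    and contraction: "\<And>z. \<bar>norm (ip u z) - norm (ip v z)\<bar> \<le> \<bar>norm (ip x z) - norm (ip y z)\<bar>"
    using exists_orthogonal_contraction[of x y] by blast
  have "ip v u = 0"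
    using \<open>ip u v = 0\<close> by (metis ip_commute cj_zero)
  obtain s where "norm s = 1" "ip x (smult s y) = of_real (norm (ip x y))"
    by (rule exists_unimodular_aligning)
  then have "min_unimod x y > 0"
    using not_unimod min_unimod_aligned by auto
  obtain x2 y2 where swap: "x2 = u \<and> y2 = v \<or> x2 = v \<and> y2 = u" and longer: "norm y2 \<le> norm x2"
    by (metis nle_le)
  then have "ip x2 y2 = 0" and min2: "min_unimod x2 y2 = min_unimod x y"
    and phase2: "phase_dist M xt x2 y2 \<le> phase_dist M xt x y"
    using \<open>ip u v = 0\<close> \<open>ip v u = 0\<close> norms \<open>min_unimod x y > 0\<close>
      phase_dist_mono[OF meas sq_int contraction] min_unimod_orthogonal
    by (auto simp: phase_dist_commute add.commute)
  have "x2 \<noteq> 0"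
    using longer min2 \<open>min_unimod x y > 0\<close>
      min_unimod_orthogonal[OF \<open>ip x2 y2 = 0\<close>] by auto
  define xo where "xo = (1 / norm x2) *\<^sub>R x2"
  define yo where "yo = (1 / norm x2) *\<^sub>R y2"
  note normalized = normalized_orthogonal_pair[OF meas \<open>ip x2 y2 = 0\<close> longer \<open>x2 \<noteq> 0\<close>,
      folded xo_def yo_def]
  have "phase_dist M xt xo yo / min_unimod xo yo \<le> phase_dist M xt x y / min_unimod x y"
    using normalized(5) min2 phase2 \<open>min_unimod x y > 0\<close> by (simp add: divide_right_mono)
  moreover have "\<exists>a b. xo = smult a x + smult b y" "\<exists>a b. yo = smult a x + smult b y"
    using swap span unfolding xo_def yo_def by (metis scaleR_smult_combination)+
  ultimately show ?thesis
    using that normalized(1-4) by blast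
qed

end

interpretation real: inner_product_space "scaleR :: real \<Rightarrow> 'a::real_inner \<Rightarrow> 'a" inner "\<lambda>z. z"
  by unfold_locales
    (simp_all add: scaleR_add_right inner_add_left inner_add_right inner_commute dot_square_norm power2_eq_square)

lemma cinner_self_eq_norm_sq: "cinner x x = of_real ((norm x)\<^sup>2)"
proof -
  have "Im (cinner x x) = 0"
    using cinner_commute[of x x] by (metis Im_complex_of_real Reals_cnj_iff complex_is_Real_iff)
  then show ?thesis
    by (simp add: complex_eq_iff norm_eq_sqrt_cinner cinner_self_nonneg)
qed

interpretation complex: inner_product_space "scaleC :: complex \<Rightarrow> 'a::complex_inner \<Rightarrow> 'a" cinner cnj
  by unfold_locales
    (simp_all add: scaleC_add_right scaleC_scaleC scaleR_scaleC cinner_add_left cinner_scaleC_left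
      cinner_self_eq_norm_sq flip: complex_norm_square cinner_commute)

lemma rframe_bessel:
  assumes "rframe M xt"
  shows "(\<lambda>t. inner z (xt t)) \<in> borel_measurable M"
    and "(\<integral>\<^sup>+ t. ennreal ((norm (inner z (xt t)))\<^sup>2) \<partial>M) < \<infinity>"
  using assms unfolding rframe_def by (auto intro: le_less_trans)

lemma cframe_bessel:
  assumes "cframe M xt"
  shows "(\<lambda>t. cinner z (xt t)) \<in> borel_measurable M"
    and "(\<integral>\<^sup>+ t. ennreal ((norm (cinner z (xt t)))\<^sup>2) \<partial>M) < \<infinity>"
  using assms unfolding cframe_def by (auto intro: le_less_trans)

lemma rphase_dist_eq: "rphase_dist = real.phase_dist"
  by (intro ext) (simp add: rphase_dist_def real.phase_dist_def L2_dist_def)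

lemma cphase_dist_eq: "cphase_dist = complex.phase_dist"
  by (intro ext) (simp add: cphase_dist_def complex.phase_dist_def L2_dist_def)

lemma rmin_unimod_eq: "rmin_unimod = real.min_unimod"
  by (intro ext) (simp add: rmin_unimod_def real.min_unimod_def)

lemma cmin_unimod_eq: "cmin_unimod = complex.min_unimod"
  by (intro ext) (simp add: cmin_unimod_def complex.min_unimod_def)

corollary rframe_phase_ratio_reduction:
  fixes xt :: "'t \<Rightarrow> 'a::{real_inner,complete_space}"
  assumes "rframe M xt" and "\<forall>l::real. \<bar>l\<bar> = 1 \<longrightarrow> x \<noteq> l *\<^sub>R y"
  shows "\<exists>xo yo. (\<exists>a b. xo = a *\<^sub>R x + b *\<^sub>R y) \<and> (\<exists>a b. yo = a *\<^sub>R x + b *\<^sub>R y) \<and>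
    norm xo = 1 \<and> norm yo \<le> 1 \<and> inner xo yo = 0 \<and>
    rphase_dist M xt x y / rmin_unimod x y \<ge> rphase_dist M xt xo yo / rmin_unimod xo yo \<and>
    rphase_dist M xt xo yo / rmin_unimod xo yo = rphase_dist M xt xo yo / sqrt (1 + (norm yo)\<^sup>2)"
proof -
  have "\<forall>l. norm l = 1 \<longrightarrow> x \<noteq> l *\<^sub>R y"
    using assms(2) by simp
  then obtain xo yo where "(\<exists>a b. xo = a *\<^sub>R x + b *\<^sub>R y)" "(\<exists>a b. yo = a *\<^sub>R x + b *\<^sub>R y)"
    "norm xo = 1" "norm yo \<le> 1" "inner xo yo = 0"
    "real.phase_dist M xt xo yo / real.min_unimod xo yo \<le> real.phase_dist M xt x y / real.min_unimod x y"
    "real.min_unimod xo yo = sqrt (1 + (norm yo)\<^sup>2)"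
    using real.phase_ratio_orthogonal_reduction[OF rframe_bessel[OF assms(1)]] by blast
  then show ?thesis
    unfolding rphase_dist_eq rmin_unimod_eq by (intro exI[of _ xo] exI[of _ yo] conjI) simp_all
qed

corollary cframe_phase_ratio_reduction:
  fixes xt :: "'t \<Rightarrow> 'a::{complex_inner,complete_space}"
  assumes "cframe M xt" and "\<forall>l::complex. cmod l = 1 \<longrightarrow> x \<noteq> l *\<^sub>C y"
  shows "\<exists>xo yo. (\<exists>a b. xo = a *\<^sub>C x + b *\<^sub>C y) \<and> (\<exists>a b. yo = a *\<^sub>C x + b *\<^sub>C y) \<and>
    norm xo = 1 \<and> norm yo \<le> 1 \<and> cinner xo yo = 0 \<and>
    cphase_dist M xt x y / cmin_unimod x y \<ge> cphase_dist M xt xo yo / cmin_unimod xo yo \<and>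
    cphase_dist M xt xo yo / cmin_unimod xo yo = cphase_dist M xt xo yo / sqrt (1 + (norm yo)\<^sup>2)"
proof -
  obtain xo yo where "(\<exists>a b. xo = a *\<^sub>C x + b *\<^sub>C y)" "(\<exists>a b. yo = a *\<^sub>C x + b *\<^sub>C y)"
    "norm xo = 1" "norm yo \<le> 1" "cinner xo yo = 0"
    "complex.phase_dist M xt xo yo / complex.min_unimod xo yo
      \<le> complex.phase_dist M xt x y / complex.min_unimod x y"
    "complex.min_unimod xo yo = sqrt (1 + (norm yo)\<^sup>2)"
    using complex.phase_ratio_orthogonal_reduction[OF cframe_bessel[OF assms(1)] assms(2)] by blast
  then show ?thesis
    unfolding cphase_dist_eq cmin_unimod_eq by (intro exI[of _ xo] exI[of _ yo] conjI) simp_all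
qed

theorem theorem2p1:
  shows
  "(\<forall>(M :: 't measure) (xt :: 't \<Rightarrow> 'a::{real_inner,complete_space}) x y.
      rframe M xt \<and> (\<forall>l::real. \<bar>l\<bar> = 1 \<longrightarrow> x \<noteq> l *\<^sub>R y) \<longrightarrow>
      (\<exists>xo yo. (\<exists>a b. xo = a *\<^sub>R x + b *\<^sub>R y) \<and> (\<exists>a b. yo = a *\<^sub>R x + b *\<^sub>R y) \<and>
         norm xo = 1 \<and> norm yo \<le> 1 \<and> inner xo yo = 0 \<and>
         rphase_dist M xt x y / rmin_unimod x y \<ge> rphase_dist M xt xo yo / rmin_unimod xo yo \<and>
         rphase_dist M xt xo yo / rmin_unimod xo yo
           = rphase_dist M xt xo yo / sqrt (1 + (norm yo)\<^sup>2)))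
   \<and>
   (\<forall>(M :: 's measure) (xt :: 's \<Rightarrow> 'b::{complex_inner,complete_space}) x y.
      cframe M xt \<and> (\<forall>l::complex. cmod l = 1 \<longrightarrow> x \<noteq> l *\<^sub>C y) \<longrightarrow>
      (\<exists>xo yo. (\<exists>a b. xo = a *\<^sub>C x + b *\<^sub>C y) \<and> (\<exists>a b. yo = a *\<^sub>C x + b *\<^sub>C y) \<and>
         norm xo = 1 \<and> norm yo \<le> 1 \<and> cinner xo yo = 0 \<and>
         cphase_dist M xt x y / cmin_unimod x y \<ge> cphase_dist M xt xo yo / cmin_unimod xo yo \<and>
         cphase_dist M xt xo yo / cmin_unimod xo yo
           = cphase_dist M xt xo yo / sqrt (1 + (norm yo)\<^sup>2)))"
  using rframe_phase_ratio_reduction cframe_phase_ratio_reduction by blast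

end
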